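(* Let $m > 1$ be an integer and $a$ a non-negative integer. Then the congruence class of $a$ modulo $m$ contains infinitely many $\pi/4$-congruent numbers that are pairwise inequivalent modulo $(\mathbb{Q}^\times)^2$. The same statement holds for $3\pi/4$-congruent numbers.
   Context: For $\theta \in \{\pi/4,3\pi/4\}$, a positive integer $n$ is $\theta$-congruent if there exist positive rationals $a,b,c$ such that the triangle with sides $a$, $b\sqrt2$, $c$ has angle $\theta$ opposite $c$ and area $n$; equivalently $ab = 2n$ and $c^2 = a^2+2b^2-2ab$ (for $\theta = \pi/4$), resp. $c^2 = a^2+2b^2+2ab$ (for $\theta=3\pi/4$). *)

theory Defs
  imports Complex_Main
begin

text \<open>A positive integer n is (pi/4)-congruent if there are positive rationals a, b, c
  with a b = 2 n and c^2 = a^2 + 2 b^2 - 2 a b (triangle with sides a, b sqrt 2, c,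
  angle pi/4 opposite c, area n).\<close>
definition pi4_congruent :: "nat \<Rightarrow> bool" where
  "pi4_congruent n \<longleftrightarrow> n > 0 \<and>
     (\<exists>a b c :: rat. a > 0 \<and> b > 0 \<and> c > 0 \<and> a * b = 2 * of_nat n \<and>
        c ^ 2 = a ^ 2 + 2 * b ^ 2 - 2 * a * b)"

definition pi34_congruent :: "nat \<Rightarrow> bool" where
  "pi34_congruent n \<longleftrightarrow> n > 0 \<and>
     (\<exists>a b c :: rat. a > 0 \<and> b > 0 \<and> c > 0 \<and> a * b = 2 * of_nat n \<and>
        c ^ 2 = a ^ 2 + 2 * b ^ 2 + 2 * a * b)"

definition sq_class_equiv :: "nat \<Rightarrow> nat \<Rightarrow> bool" where
  "sq_class_equiv n1 n2 \<longleftrightarrow> (\<exists>q :: rat. q \<noteq> 0 \<and> of_nat n1 = q ^ 2 * of_nat n2)"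

end

theory Submission
  imports Defs "HOL-Number_Theory.Cong"
begin

text \<open>If (u, v) parametrizes the Pythagorean triple (u^2 - v^2, 2uv, u^2 + v^2), then
  taking it as (a - b, b, c), resp. (a + b, b, c), yields a triangle of angle \<pi>/4, resp. 3\<pi>/4.
  With u = A + 1, v = A, resp. u = 3A + 1, v = A, and A = m^2 z, its area is
  z (A + 1)(2A^2 + 4A + 1), resp. z (3A + 1)(2A^2 + 4A + 1), which is congruent to z modulo
  both m and every prime factor of z. Choosing z \<equiv> a (mod m) divisible exactly once by a prime
  p exceeding all previously chosen numbers gives a new congruent number whose p-adic
  valuation is odd while that of all earlier ones is zero; as the parity of every p-adic
  valuation is an invariant of the square class, these numbers are pairwise inequivalent.\<close>

lemma sq_class_equiv_multiplicity_parity: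
  fixes x y p :: nat
  assumes "sq_class_equiv x y" and "prime p"
  shows "even (multiplicity p x) \<longleftrightarrow> even (multiplicity p y)"
proof -
  obtain q :: rat where "q \<noteq> 0" and xy: "of_nat x = q ^ 2 * of_nat y"
    using assms(1) unfolding sq_class_equiv_def by blast
  obtain r s where "quotient_of q = (r, s)" by fastforce
  hence q: "q = of_int r / of_int s" and "s > 0"
    using quotient_of_div quotient_of_denom_pos by blast+
  with \<open>q \<noteq> 0\<close> have "r \<noteq> 0" by auto
  have "of_int (int x * s ^ 2) = (of_int (r ^ 2 * int y) :: rat)"
    using xy \<open>s > 0\<close> unfolding q by (simp add: field_simps)
  hence "int (x * nat s ^ 2) = int (nat \<bar>r\<bar> ^ 2 * y)"
    using \<open>s > 0\<close> by (simp only: of_int_eq_iff) simp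
  hence eq: "x * nat s ^ 2 = nat \<bar>r\<bar> ^ 2 * y"
    by (simp only: of_nat_eq_iff)
  show ?thesis
  proof (cases "x = 0")
    case True
    with eq \<open>r \<noteq> 0\<close> show ?thesis by simp
  next
    case False
    with eq \<open>s > 0\<close> have "y \<noteq> 0" by (cases "y = 0") auto
    have "prime_elem p" using \<open>prime p\<close> by simp
    have "multiplicity p (x * nat s ^ 2) = multiplicity p (nat \<bar>r\<bar> ^ 2 * y)"
      using eq by simp
    hence "multiplicity p x + 2 * multiplicity p (nat s) =
           2 * multiplicity p (nat \<bar>r\<bar>) + multiplicity p y"
      using False \<open>y \<noteq> 0\<close> \<open>r \<noteq> 0\<close> \<open>s > 0\<close> \<open>prime_elem p\<close>
      by (simp add: prime_elem_multiplicity_mult_distrib prime_elem_multiplicity_power_distrib)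
    thus ?thesis by presburger
  qed
qed

lemma infinite_set_pairwise_not_sq_class_equiv:
  fixes P :: "nat \<Rightarrow> bool"
  assumes large_prime: "\<And>N. \<exists>n p. P n \<and> prime p \<and> N < p \<and> odd (multiplicity p n)"
  shows "\<exists>S. infinite S \<and> (\<forall>n\<in>S. P n) \<and>
             (\<forall>n1\<in>S. \<forall>n2\<in>S. n1 \<noteq> n2 \<longrightarrow> \<not> sq_class_equiv n1 n2)"
proof -
  obtain pick prime_of where pick: "\<And>N. P (pick N)" "\<And>N. prime (prime_of N)"
    "\<And>N. N < prime_of N" "\<And>N. odd (multiplicity (prime_of N) (pick N))"
    using large_prime by metis
  have multiplicity_pos: "0 < multiplicity (prime_of N) (pick N)" for N
    using pick(4) by (rule odd_pos)
  hence dvd_pick: "prime_of N dvd pick N" for N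
    by (metis not_dvd_imp_multiplicity_0 less_irrefl)
  have pick_pos: "0 < pick N" for N
    using multiplicity_pos[of N] by (cases "pick N = 0") auto
  have pick_gt: "N < pick N" for N
    using pick(3) dvd_imp_le[OF dvd_pick pick_pos] by (rule less_le_trans)
  define g where "g j = (pick ^^ Suc j) 0" for j
  have g_Suc: "g (Suc j) = pick (g j)" for j
    unfolding g_def by simp
  have g_pos: "0 < g j" for j
    unfolding g_def using pick_pos by simp
  have "strict_mono g"
    unfolding strict_mono_Suc_iff g_Suc using pick_gt by blast
  have not_equiv: "\<not> sq_class_equiv (g i) (g j) \<and> \<not> sq_class_equiv (g j) (g i)"
    if "i < j" for i j
  proof -
    obtain k where j: "j = Suc k" and "i \<le> k"
      using \<open>i < j\<close> by (cases j) auto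
    define p where "p = prime_of (g k)"
    have "g i < p"
      using \<open>strict_mono g\<close> \<open>i \<le> k\<close> pick(3) unfolding p_def
      by (meson le_less_trans strict_mono_less_eq)
    hence "\<not> p dvd g i"
      using g_pos by (meson dvd_imp_le not_le)
    hence "even (multiplicity p (g i))"
      by (simp add: not_dvd_imp_multiplicity_0)
    moreover have "odd (multiplicity p (g j))" "prime p"
      using pick unfolding j g_Suc p_def by blast+
    ultimately show ?thesis
      using sq_class_equiv_multiplicity_parity by blast
  qed
  show ?thesis
  proof (intro exI conjI)
    show "infinite (range g)"
      using \<open>strict_mono g\<close> by (metis finite_imageD infinite_UNIV_nat strict_mono_imp_inj_on)
    show "\<forall>n\<in>range g. P n"
      unfolding g_def using pick(1) by auto
    show "\<forall>n1\<in>range g. \<forall>n2\<in>range g. n1 \<noteq> n2 \<longrightarrow> \<not> sq_class_equiv n1 n2"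
      using not_equiv by (metis linorder_neqE_nat rangeE)
  qed
qed

lemma pi4_congruent_of_parametrization:
  fixes u v d :: rat
  assumes "0 < u" "0 < v" "0 < d" "0 < u\<^sup>2 + 2*u*v - v\<^sup>2"
    and n: "of_nat n * d\<^sup>2 = u * v * (u\<^sup>2 + 2*u*v - v\<^sup>2)"
  shows "pi4_congruent n"
  unfolding pi4_congruent_def
proof (intro conjI exI)
  have "0 < of_nat n * d\<^sup>2"
    unfolding n using assms by simp
  thus "0 < n"
    by (cases "n = 0") auto
  show "0 < (u\<^sup>2 + 2*u*v - v\<^sup>2) / d" "0 < 2*u*v / d" "0 < (u\<^sup>2 + v\<^sup>2) / d"
    using assms by (simp_all add: add_pos_pos)
  show "(u\<^sup>2 + 2*u*v - v\<^sup>2) / d * (2*u*v / d) = 2 * of_nat n"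
    using n \<open>0 < d\<close> by (simp add: field_simps power2_eq_square)
  show "((u\<^sup>2 + v\<^sup>2) / d)\<^sup>2 = ((u\<^sup>2 + 2*u*v - v\<^sup>2) / d)\<^sup>2 + 2 * (2*u*v / d)\<^sup>2
          - 2 * ((u\<^sup>2 + 2*u*v - v\<^sup>2) / d) * (2*u*v / d)"
    using \<open>0 < d\<close> by (simp add: field_simps power2_eq_square)
qed

lemma pi34_congruent_of_parametrization:
  fixes u v d :: rat
  assumes "0 < u" "0 < v" "0 < d" "0 < u\<^sup>2 - 2*u*v - v\<^sup>2"
    and n: "of_nat n * d\<^sup>2 = u * v * (u\<^sup>2 - 2*u*v - v\<^sup>2)"
  shows "pi34_congruent n"
  unfolding pi34_congruent_def
proof (intro conjI exI)
  have "0 < of_nat n * d\<^sup>2"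
    unfolding n using assms by simp
  thus "0 < n"
    by (cases "n = 0") auto
  show "0 < (u\<^sup>2 - 2*u*v - v\<^sup>2) / d" "0 < 2*u*v / d" "0 < (u\<^sup>2 + v\<^sup>2) / d"
    using assms by (simp_all add: add_pos_pos)
  show "(u\<^sup>2 - 2*u*v - v\<^sup>2) / d * (2*u*v / d) = 2 * of_nat n"
    using n \<open>0 < d\<close> by (simp add: field_simps power2_eq_square)
  show "((u\<^sup>2 + v\<^sup>2) / d)\<^sup>2 = ((u\<^sup>2 - 2*u*v - v\<^sup>2) / d)\<^sup>2 + 2 * (2*u*v / d)\<^sup>2
          + 2 * ((u\<^sup>2 - 2*u*v - v\<^sup>2) / d) * (2*u*v / d)"
    using \<open>0 < d\<close> by (simp add: field_simps power2_eq_square)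
qed

lemma pi4_congruent_family:
  fixes m z :: nat
  assumes "0 < m" "0 < z"
  defines "A \<equiv> m\<^sup>2 * z"
  shows "pi4_congruent (z * ((A + 1) * (2*A\<^sup>2 + 4*A + 1)))"
proof (rule pi4_congruent_of_parametrization)
  let ?A = "rat_of_nat A" and ?m = "rat_of_nat m"
  show "0 < ?A + 1" by simp
  show "0 < ?A" "0 < ?m"
    using assms(1,2) unfolding A_def by simp_all
  show "0 < (?A + 1)\<^sup>2 + 2 * (?A + 1) * ?A - ?A\<^sup>2"
    by (simp add: power2_eq_square algebra_simps add_pos_nonneg)
  show "of_nat (z * ((A + 1) * (2*A\<^sup>2 + 4*A + 1))) * ?m\<^sup>2 =
        (?A + 1) * ?A * ((?A + 1)\<^sup>2 + 2 * (?A + 1) * ?A - ?A\<^sup>2)"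
    unfolding A_def by (simp add: power2_eq_square algebra_simps)
qed

lemma pi34_congruent_family:
  fixes m z :: nat
  assumes "0 < m" "0 < z"
  defines "A \<equiv> m\<^sup>2 * z"
  shows "pi34_congruent (z * ((3*A + 1) * (2*A\<^sup>2 + 4*A + 1)))"
proof (rule pi34_congruent_of_parametrization)
  let ?A = "rat_of_nat A" and ?m = "rat_of_nat m"
  show "0 < 3 * ?A + 1" by simp
  show "0 < ?A" "0 < ?m"
    using assms(1,2) unfolding A_def by simp_all
  show "0 < (3 * ?A + 1)\<^sup>2 - 2 * (3 * ?A + 1) * ?A - ?A\<^sup>2"
    by (simp add: power2_eq_square algebra_simps add_pos_nonneg)
  show "of_nat (z * ((3*A + 1) * (2*A\<^sup>2 + 4*A + 1))) * ?m\<^sup>2 =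
        (3 * ?A + 1) * ?A * ((3 * ?A + 1)\<^sup>2 - 2 * (3 * ?A + 1) * ?A - ?A\<^sup>2)"
    unfolding A_def by (simp add: power2_eq_square algebra_simps)
qed

lemma residue_class_has_exact_large_prime_factor:
  fixes m a N :: nat
  assumes "0 < m"
  shows "\<exists>z p. z mod m = a mod m \<and> prime p \<and> N < p \<and> multiplicity p z = 1"
proof -
  obtain p where "prime p" and p_large: "N + 2 * m < p"
    using bigger_prime by blast
  have "\<not> p dvd m"
    using \<open>0 < m\<close> p_large dvd_imp_le[of p m] by linarith
  hence "coprime p m"
    using \<open>prime p\<close> by (simp add: prime_imp_coprime)
  then obtain x where x: "[p * x = a] (mod m)"
    using cong_solve_dvd_nat[of p m a] by auto
  define c where "c = x mod m + m"
  have "0 < c" "c < p"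
    using \<open>0 < m\<close> p_large mod_less_divisor[OF \<open>0 < m\<close>, of x] unfolding c_def by linarith+
  hence "\<not> p dvd c"
    by (meson dvd_imp_le not_le)
  have "(c * p) mod m = (p * x) mod m"
    unfolding c_def by (simp add: algebra_simps mod_mult_right_eq)
  also have "\<dots> = a mod m"
    using x unfolding cong_def .
  finally have "(c * p) mod m = a mod m" .
  moreover have "multiplicity p (c * p) = 1"
    using \<open>prime p\<close> \<open>\<not> p dvd c\<close> by (simp add: multiplicity_prime_elem_times_other)
  ultimately show ?thesis
    using \<open>prime p\<close> p_large by (intro exI[of _ "c * p"] exI[of _ p]) simp
qed

lemma multiplicity_mult_cong_one:
  fixes p z k :: nat
  assumes "prime p" and "[k = 1] (mod p)"
  shows "multiplicity p (z * k) = multiplicity p z"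
proof -
  have "\<not> p dvd k"
    using cong_dvd_iff[OF assms(2)] \<open>prime p\<close> by (auto simp: prime_gt_1_nat)
  thus ?thesis
    using \<open>prime p\<close> multiplicity_prime_elem_times_other[of p k z] by (simp add: mult.commute)
qed

lemma residue_class_has_member_of_family:
  fixes m a N :: nat and C :: "nat \<Rightarrow> bool" and k :: "nat \<Rightarrow> nat"
  assumes "0 < m"
    and family: "\<And>z. 0 < z \<Longrightarrow> C (z * k (m\<^sup>2 * z))"
    and k_cong: "\<And>A. [k A = 1] (mod A)"
  shows "\<exists>n p. (n mod m = a mod m \<and> C n) \<and> prime p \<and> N < p \<and> odd (multiplicity p n)"
proof -
  obtain z p where z: "z mod m = a mod m" and "prime p" "N < p" and p_exact: "multiplicity p z = 1"
    using residue_class_has_exact_large_prime_factor[OF \<open>0 < m\<close>] by blast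
  have "0 < z"
    using p_exact by (cases "z = 0") auto
  have "p dvd z"
    using p_exact not_dvd_imp_multiplicity_0 by fastforce
  define n where "n = z * k (m\<^sup>2 * z)"
  have "[n = z * 1] (mod m)"
    unfolding n_def by (intro cong_scalar_left cong_dvd_modulus_nat[OF k_cong]) simp
  hence "n mod m = a mod m"
    using z by (simp add: cong_def)
  moreover have "[k (m\<^sup>2 * z) = 1] (mod p)"
    using cong_dvd_modulus_nat[OF k_cong] \<open>p dvd z\<close> by simp
  hence "multiplicity p n = 1"
    unfolding n_def using \<open>prime p\<close> p_exact by (simp add: multiplicity_mult_cong_one)
  moreover have "C n"
    unfolding n_def using \<open>0 < z\<close> by (rule family)
  ultimately show ?thesis
    using \<open>prime p\<close> \<open>N < p\<close> by (intro exI[of _ n] exI[of _ p]) simp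
qed

theorem theorem5p2:
  fixes m a :: nat
  assumes "m > 1"
  shows "(\<exists>S :: nat set. infinite S \<and>
            (\<forall>n\<in>S. n mod m = a mod m \<and> pi4_congruent n) \<and>
            (\<forall>n1\<in>S. \<forall>n2\<in>S. n1 \<noteq> n2 \<longrightarrow> \<not> sq_class_equiv n1 n2))
       \<and> (\<exists>S :: nat set. infinite S \<and>
            (\<forall>n\<in>S. n mod m = a mod m \<and> pi34_congruent n) \<and>
            (\<forall>n1\<in>S. \<forall>n2\<in>S. n1 \<noteq> n2 \<longrightarrow> \<not> sq_class_equiv n1 n2))"
proof -
  have "0 < m"
    using assms by simp
  have family_cong: "[(e * A + 1) * (2 * A\<^sup>2 + 4 * A + 1) = 1] (mod A)" for e A :: nat
  proof -
    have "(e * A + 1) * (2 * A\<^sup>2 + 4 * A + 1) = 1 + A * (e * (2 * A\<^sup>2 + 4 * A + 1) + 2 * A + 4)"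
      by (simp add: power2_eq_square algebra_simps)
    thus ?thesis
      using cong_add[OF cong_refl[of 1] cong_mult_self_left[of A]] by simp
  qed
  show ?thesis
  proof (intro conjI infinite_set_pairwise_not_sq_class_equiv)
    show "\<exists>n p. (n mod m = a mod m \<and> pi4_congruent n) \<and> prime p \<and> N < p \<and> odd (multiplicity p n)"
      for N
      using \<open>0 < m\<close> pi4_congruent_family family_cong[of 1]
      by (intro residue_class_has_member_of_family[where k = "\<lambda>A. (A + 1) * (2 * A\<^sup>2 + 4 * A + 1)"])
        simp_all
    show "\<exists>n p. (n mod m = a mod m \<and> pi34_congruent n) \<and> prime p \<and> N < p \<and> odd (multiplicity p n)"
      for N
      using \<open>0 < m\<close> pi34_congruent_family family_cong[of 3]
      by (intro residue_class_has_member_of_family[where k = "\<lambda>A. (3 * A + 1) * (2 * A\<^sup>2 + 4 * A + 1)"])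
        simp_all
  qed
qed

end
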